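(* Let $\{X_n\}_{n\ge1}$ be a strictly stationary sequence of centered, square integrable, associated random variables with $\sum_{j=1}^\infty c_j<\infty$, where $c_j=\mathrm{Cov}(X_1,X_{1+j})$, and $\sigma^2:=E X_1^2+2\sum_{j=1}^\infty c_j>0$. Let $S_n=\sum_{j=1}^nX_j$, $s_n^2=ES_n^2$, and assume (A2) $\left|\frac{s_n^2}{n\sigma^2}-1\right|=O(n^{-\theta})$ for some $\theta>0$. Fix $0<\alpha<1$, let $p_n=[n^{1-\alpha}]$, $m_n=[n/p_n]$, $b_n=(\log n)^b$ with $b<0$. Let $G_n$ be the distribution function with characteristic function $\exp\!\big(-\frac{m_nt^2s_{p_n}^2}{2s_n^2}\big)$ and $\Phi$ the standard normal distribution function. Then there are constants $C_{17},C_{18}>0$ independent of $n$ such that for all sufficiently large $n$ $$\sup_{x\in\mathbb R}|G_n(x)-\Phi(x)|<C_{17}\frac{1}{b_nn^{\alpha/2}}I\Big(\alpha\le\tfrac{2\theta}{1+2\theta}\Big)+C_{18}\frac{1}{n^{(1-\alpha)\theta}}I\Big(\alpha>\tfrac{2\theta}{1+2\theta}\Big).$$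
   Context: Associated: $\mathrm{Cov}(f(X_1,\dots,X_k),g(X_1,\dots,X_k))\ge0$ for all coordinatewise nondecreasing $f,g$ for which it exists, for every finite initial segment. $[r]$ is the largest integer $\le r$; $I(\cdot)$ is the indicator of the condition. *)

theory Defs
  imports "HOL-Probability.Probability" "HOL-Library.Landau_Symbols"
begin

text \<open>The sequence is indexed from 1: X 1, X 2, ...  (the value X 0 plays no role).\<close>

text \<open>Associated: for every finite initial segment (X_1,...,X_k) and all coordinatewise
  nondecreasing f, g for which the covariance exists, Cov(f(X_1..X_k), g(X_1..X_k)) >= 0.
  A vector in R^k is represented as a function nat => real, coordinate i (i < k) being X_(i+1);
  coordinatewise monotonicity in the first k coordinates forces f to depend only on them.\<close>
definition coord_mono :: "nat \<Rightarrow> ((nat \<Rightarrow> real) \<Rightarrow> real) \<Rightarrow> bool" where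
  "coord_mono k f \<longleftrightarrow> (\<forall>x y. (\<forall>i<k. x i \<le> y i) \<longrightarrow> f x \<le> f y)"

definition associated :: "'a measure \<Rightarrow> (nat \<Rightarrow> 'a \<Rightarrow> real) \<Rightarrow> bool" where
  "associated M X \<longleftrightarrow>
     (\<forall>k f g. coord_mono k f \<and> coord_mono k g
        \<and> integrable M (\<lambda>\<omega>. f (\<lambda>i. X (Suc i) \<omega>))
        \<and> integrable M (\<lambda>\<omega>. g (\<lambda>i. X (Suc i) \<omega>))
        \<and> integrable M (\<lambda>\<omega>. f (\<lambda>i. X (Suc i) \<omega>) * g (\<lambda>i. X (Suc i) \<omega>))
        \<longrightarrow> (\<integral>\<omega>. f (\<lambda>i. X (Suc i) \<omega>) * g (\<lambda>i. X (Suc i) \<omega>) \<partial>M)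
              - (\<integral>\<omega>. f (\<lambda>i. X (Suc i) \<omega>) \<partial>M) * (\<integral>\<omega>. g (\<lambda>i. X (Suc i) \<omega>) \<partial>M) \<ge> 0)"

definition strictly_stationary :: "'a measure \<Rightarrow> (nat \<Rightarrow> 'a \<Rightarrow> real) \<Rightarrow> bool" where
  "strictly_stationary M X \<longleftrightarrow>
     (\<forall>k h. distr M (PiM {..<k} (\<lambda>_. (borel :: real measure))) (\<lambda>\<omega>. \<lambda>i\<in>{..<k}. X (Suc i + h) \<omega>)
          = distr M (PiM {..<k} (\<lambda>_. (borel :: real measure))) (\<lambda>\<omega>. \<lambda>i\<in>{..<k}. X (Suc i) \<omega>))"

end

theory Submission
  imports Defs "HOL-Real_Asymp.Real_Asymp"
begin

(*
  G_n is the centered normal law with variance v_n = m_n s^2(p_n) / s^2(n), so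
  G_n(x) = Phi(x / sqrt v_n). Because y phi(y) <= 1, rescaling the argument of Phi by a factor
  s changes it by at most |s - 1| / min 1 s, which gives sup |G_n - Phi| <= 2 |v_n - 1|.
  By (A2), s^2(k) = k sigma^2 (1 + O(k^-theta)); together with n - p_n <= m_n p_n <= n and
  p_n ~ n^(1-alpha) this yields |v_n - 1| = O(n^-alpha + n^-((1-alpha) theta)). In the regime
  alpha <= 2 theta / (1 + 2 theta) both terms are O(n^(-alpha/2)), and b_n <= 1; otherwise
  both are O(n^-((1-alpha) theta)).
  Only (A2) and sigma^2 > 0 are used: association and stationarity matter for (A2), not here.
*)

lemma std_normal_density_antimono_abs:
  fixes r y :: real
  assumes "0 \<le> r" "r \<le> \<bar>y\<bar>"
  shows "std_normal_density y \<le> std_normal_density r"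
proof -
  have "r\<^sup>2 \<le> y\<^sup>2" using assms by (metis abs_ge_zero power2_abs power_mono)
  then show ?thesis unfolding std_normal_density_def
    by (intro mult_left_mono) auto
qed

lemma mult_std_normal_density_le_one:
  fixes r :: real
  assumes "0 \<le> r"
  shows "r * std_normal_density r \<le> 1"
proof -
  have "r \<le> 1 + r\<^sup>2 / 2"
    using zero_le_power2[of "r - 1"] by (simp add: power2_eq_square algebra_simps)
  also have "\<dots> \<le> exp (r\<^sup>2 / 2)" by (rule exp_ge_add_one_self)
  finally have "r * exp (- (r\<^sup>2 / 2)) \<le> 1"
    by (simp add: exp_minus divide_simps)
  moreover have "1 / sqrt (2 * pi) \<le> 1"
    using pi_gt3 by simp
  ultimately have "r * exp (- (r\<^sup>2 / 2)) * (1 / sqrt (2 * pi)) \<le> 1 * 1"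
    by (intro mult_mono) (use assms in auto)
  then show ?thesis unfolding std_normal_density_def by (simp add: algebra_simps)
qed

lemma measure_std_normal_Ioc_le:
  fixes a b c :: real
  assumes "a \<le> b" "c \<ge> 0" "\<And>y. a < y \<Longrightarrow> y \<le> b \<Longrightarrow> std_normal_density y \<le> c"
  shows "measure std_normal_distribution {a<..b} \<le> c * (b - a)"
proof -
  have "emeasure std_normal_distribution {a<..b}
      = (\<integral>\<^sup>+x. ennreal (std_normal_density x) * indicator {a<..b} x \<partial>lborel)"
    by (subst emeasure_density) auto
  also have "\<dots> \<le> (\<integral>\<^sup>+x. ennreal c * indicator {a<..b} x \<partial>lborel)"
    by (intro nn_integral_mono) (auto simp: indicator_def assms(3) ennreal_leI)
  also have "\<dots> = ennreal (c * (b - a))"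
    using assms by (simp add: nn_integral_cmult_indicator ennreal_mult)
  finally show ?thesis
    using assms by (simp add: measure_def enn2real_leI)
qed

lemma cdf_std_normal_diff:
  fixes a b :: real
  assumes "a \<le> b"
  shows "cdf std_normal_distribution b - cdf std_normal_distribution a
       = measure std_normal_distribution {a<..b}"
proof (cases "a = b")
  case False
  interpret real_distribution std_normal_distribution by (rule real_dist_normal_dist)
  show ?thesis using assms False by (intro cdf_diff_eq) auto
qed simp

text \<open>The interval between \<open>x\<close> and \<open>s x\<close> has length \<open>\<bar>s - 1\<bar> \<bar>x\<bar>\<close> and stays at distance
  \<open>r = min 1 s \<bar>x\<bar>\<close> from the origin, where the density is at most \<open>\<phi>(r) \<le> 1 / r\<close>.\<close>
lemma cdf_std_normal_scale_diff:
  fixes s x :: real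
  assumes s: "s > 0"
  shows "\<bar>cdf std_normal_distribution (s * x) - cdf std_normal_distribution x\<bar> \<le> \<bar>s - 1\<bar> / min 1 s"
proof -
  define a b where "a = min x (s * x)" and "b = max x (s * x)"
  define r where "r = min 1 s * \<bar>x\<bar>"
  have r0: "r \<ge> 0" using s by (simp add: r_def)
  have density_le: "std_normal_density y \<le> std_normal_density r" if "a < y" "y \<le> b" for y
  proof (rule std_normal_density_antimono_abs[OF r0])
    have "a = min 1 s * x" if "x \<ge> 0" using that by (simp add: a_def min_mult_distrib_right)
    moreover have "b = min 1 s * x" if "x < 0" using that by (simp add: b_def min_mult_distrib_right)
    ultimately show "r \<le> \<bar>y\<bar>" using \<open>a < y\<close> \<open>y \<le> b\<close> by (cases "x \<ge> 0") (auto simp: r_def)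
  qed
  have "b - a = \<bar>(s - 1) * x\<bar>"
    by (auto simp: a_def b_def max_def min_def algebra_simps)
  then have length: "b - a = \<bar>s - 1\<bar> * \<bar>x\<bar>"
    by (simp add: abs_mult)
  have "\<bar>cdf std_normal_distribution (s * x) - cdf std_normal_distribution x\<bar>
      = measure std_normal_distribution {a<..b}"
    using cdf_std_normal_diff[of x "s * x"] cdf_std_normal_diff[of "s * x" x]
    by (cases "x \<le> s * x") (auto simp: a_def b_def abs_minus_commute)
  also have "\<dots> \<le> std_normal_density r * (\<bar>s - 1\<bar> * \<bar>x\<bar>)"
    using measure_std_normal_Ioc_le[of a b "std_normal_density r"] density_le length
    by (simp add: a_def b_def normal_density_nonneg)
  also have "\<dots> = \<bar>s - 1\<bar> * (r * std_normal_density r) / min 1 s"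
    using s by (simp add: r_def)
  also have "\<dots> \<le> \<bar>s - 1\<bar> / min 1 s"
    using s mult_std_normal_density_le_one[OF r0] by (intro divide_right_mono) (auto intro: mult_left_le)
  finally show ?thesis .
qed

lemma cdf_eq_cdf_std_normal_scaled:
  fixes v x :: real and G :: "real measure"
  assumes v: "v > 0" and G: "real_distribution G"
    and char_G: "\<And>t. char G t = complex_of_real (exp (- (v * t\<^sup>2) / 2))"
  shows "cdf G x = cdf std_normal_distribution (x / sqrt v)"
proof -
  define w where "w = sqrt v"
  have w: "w > 0" using v by (simp add: w_def)
  interpret N: real_distribution std_normal_distribution by (rule real_dist_normal_dist)
  define G' where "G' = distr std_normal_distribution borel (\<lambda>y. w * y)"
  have G': "real_distribution G'"
    unfolding G'_def by (rule N.real_distribution_distr) simp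
  have "char G' t = char G t" for t
  proof -
    have "char G' t = char std_normal_distribution (t * w)"
      unfolding G'_def char_def by (subst integral_distr) (auto simp: mult.assoc)
    also have "\<dots> = complex_of_real (exp (- (v * t\<^sup>2) / 2))"
      using v by (simp add: char_std_normal_distribution w_def power_mult_distrib)
    finally show ?thesis using char_G by simp
  qed
  then have "G = G'" by (intro Levy_uniqueness[OF G G'] ext) simp
  moreover have "measure G' {..x} = measure std_normal_distribution ((\<lambda>y. w * y) -` {..x})"
    unfolding G'_def by (subst measure_distr) auto
  ultimately have "cdf G x = measure std_normal_distribution ((\<lambda>y. w * y) -` {..x})"
    by (simp add: cdf_def)
  also have "(\<lambda>y. w * y) -` {..x} = {..x / w}"
    using w by (auto simp: field_simps)
  finally show ?thesis by (simp add: cdf_def w_def)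
qed

lemma inverse_scale_error_le:
  fixes w :: real
  assumes w: "w \<ge> 1/2"
  shows "\<bar>1 / w - 1\<bar> / min 1 (1 / w) \<le> 2 * \<bar>w\<^sup>2 - 1\<bar>"
proof -
  have "\<bar>1 / w - 1\<bar> / min 1 (1 / w) = \<bar>w - 1\<bar> / min 1 w"
    using w by (cases "w \<le> 1") (auto simp: divide_simps abs_if min_def)
  also have "\<dots> \<le> 2 * \<bar>w - 1\<bar>"
    using w mult_right_mono[of 1 "2 * w" "1 - w"]
    by (cases "w \<le> 1") (auto simp: divide_simps min_def algebra_simps)
  also have "\<dots> \<le> 2 * (\<bar>w - 1\<bar> * (w + 1))"
    using w by (simp add: mult_le_cancel_left1)
  also have "\<bar>w - 1\<bar> * (w + 1) = \<bar>(w - 1) * (w + 1)\<bar>"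
    using w by (simp add: abs_mult)
  also have "(w - 1) * (w + 1) = w\<^sup>2 - 1"
    by (simp add: power2_eq_square algebra_simps)
  finally show ?thesis .
qed

lemma SUP_cdf_centered_normal_diff_le:
  fixes v :: real and G :: "real measure"
  assumes v: "v \<ge> 1/4" and G: "real_distribution G"
    and char_G: "\<And>t. char G t = complex_of_real (exp (- (v * t\<^sup>2) / 2))"
  shows "(SUP x. \<bar>cdf G x - cdf std_normal_distribution x\<bar>) \<le> 2 * \<bar>v - 1\<bar>"
proof (rule cSUP_least)
  fix x :: real
  have v0: "v > 0" using v by simp
  have "sqrt v \<ge> 1/2" using v real_sqrt_le_mono[of "1/4" v] by (simp add: real_sqrt_divide)
  have "\<bar>cdf G x - cdf std_normal_distribution x\<bar>
      = \<bar>cdf std_normal_distribution ((1 / sqrt v) * x) - cdf std_normal_distribution x\<bar>"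
    using cdf_eq_cdf_std_normal_scaled[OF v0 G char_G] by simp
  also have "\<dots> \<le> \<bar>1 / sqrt v - 1\<bar> / min 1 (1 / sqrt v)"
    using v0 by (intro cdf_std_normal_scale_diff) simp
  also have "\<dots> \<le> 2 * \<bar>(sqrt v)\<^sup>2 - 1\<bar>"
    by (rule inverse_scale_error_le) fact
  finally show "\<bar>cdf G x - cdf std_normal_distribution x\<bar> \<le> 2 * \<bar>v - 1\<bar>"
    using v0 by simp
qed simp

lemma nat_floor_divide_mult_bounds:
  fixes N P :: real
  assumes "N \<ge> 0" "P > 0"
  shows "real (nat \<lfloor>N / P\<rfloor>) * P \<le> N" and "N - P \<le> real (nat \<lfloor>N / P\<rfloor>) * P"
proof -
  have eq: "real (nat \<lfloor>N / P\<rfloor>) = of_int \<lfloor>N / P\<rfloor>"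
    using assms by simp
  have "of_int \<lfloor>N / P\<rfloor> * P \<le> N / P * P"
    using assms by (intro mult_right_mono) auto
  moreover have "(N / P - 1) * P \<le> of_int \<lfloor>N / P\<rfloor> * P"
    using assms by (intro mult_right_mono) linarith+
  ultimately show "real (nat \<lfloor>N / P\<rfloor>) * P \<le> N" "N - P \<le> real (nat \<lfloor>N / P\<rfloor>) * P"
    unfolding eq using assms by (simp_all add: algebra_simps)
qed

lemma block_length_bounds:
  fixes p :: "nat \<Rightarrow> nat" and \<alpha> :: real
  assumes \<alpha>: "\<alpha> < 1" and p_def: "\<And>n. p n = nat \<lfloor>real n powr (1 - \<alpha>)\<rfloor>"
  shows "real (p n) \<le> real n powr (1 - \<alpha>)"
    and "eventually (\<lambda>n. real n powr (1 - \<alpha>) / 2 \<le> real (p n)) sequentially"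
    and "filterlim p at_top sequentially"
proof -
  have floor: "real (p n) = of_int \<lfloor>real n powr (1 - \<alpha>)\<rfloor>" for n
    by (simp add: p_def)
  show "real (p n) \<le> real n powr (1 - \<alpha>)"
    unfolding floor by linarith
  have "eventually (\<lambda>n. 2 \<le> real n powr (1 - \<alpha>)) sequentially"
    using \<alpha> by real_asymp
  then show lower: "eventually (\<lambda>n. real n powr (1 - \<alpha>) / 2 \<le> real (p n)) sequentially"
    by eventually_elim (unfold floor, linarith)
  show "filterlim p at_top sequentially"
    unfolding filterlim_at_top
  proof
    fix k :: nat
    have "eventually (\<lambda>n. 2 * real k \<le> real n powr (1 - \<alpha>)) sequentially"
      using \<alpha> by real_asymp
    with lower show "eventually (\<lambda>n. k \<le> p n) sequentially"
      by eventually_elim simp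
  qed
qed

lemma block_powr_bound:
  fixes N P \<alpha> \<theta> :: real
  assumes "N > 0" "P \<ge> N powr (1 - \<alpha>) / 2" "\<theta> \<ge> 0"
  shows "P powr (-\<theta>) \<le> 2 powr \<theta> * N powr (-((1 - \<alpha>) * \<theta>))"
proof -
  have "P powr (-\<theta>) \<le> (N powr (1 - \<alpha>) / 2) powr (-\<theta>)"
    using assms by (intro powr_mono2') auto
  also have "\<dots> = 2 powr \<theta> * N powr (-((1 - \<alpha>) * \<theta>))"
    by (simp add: powr_divide powr_powr powr_minus divide_simps)
  finally show ?thesis .
qed

text \<open>The ratio equals \<open>q (1 + E\<^sub>P) / (1 + E\<^sub>N)\<close> with \<open>q = M P / N \<in> [1 - P/N, 1]\<close>, so its
  distance from \<open>1\<close> is at most \<open>P/N + 2 (\<bar>E\<^sub>P\<bar> + \<bar>E\<^sub>N\<bar>)\<close>.\<close>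
lemma block_variance_ratio_error:
  fixes N P M s K \<theta> \<alpha> E\<^sub>N E\<^sub>P :: real
  assumes N: "N \<ge> 1" and P: "P \<le> N powr (1 - \<alpha>)" "P \<ge> N powr (1 - \<alpha>) / 2"
    and M: "M * P \<le> N" "M * P \<ge> N - P" "M \<ge> 0"
    and E: "\<bar>E\<^sub>N\<bar> \<le> K * N powr (-\<theta>)" "\<bar>E\<^sub>P\<bar> \<le> K * P powr (-\<theta>)" "\<bar>E\<^sub>N\<bar> \<le> 1/2"
    and \<theta>: "\<theta> > 0" and \<alpha>: "0 < \<alpha>" "\<alpha> < 1" and K: "K \<ge> 0" and s: "s > 0"
  shows "\<bar>M * (P * s * (1 + E\<^sub>P)) / (N * s * (1 + E\<^sub>N)) - 1\<bar>
           \<le> N powr (-\<alpha>) + 2 * K * (2 powr \<theta> + 1) * N powr (-((1 - \<alpha>) * \<theta>))"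
proof -
  define q where "q = M * P / N"
  have N0: "N > 0" using N by simp
  have q: "0 \<le> q" "q \<le> 1" using M N0 P by (auto simp: q_def)
  have "N powr (1 - \<alpha>) = N * N powr (-\<alpha>)"
    using N0 powr_add[of N 1 "-\<alpha>"] by simp
  then have "1 - q \<le> N powr (-\<alpha>)"
    using M N0 P by (simp add: q_def divide_simps mult.commute)
  have denom: "1 + E\<^sub>N \<ge> 1/2" using E(3) by simp
  have "M * (P * s * (1 + E\<^sub>P)) / (N * s * (1 + E\<^sub>N)) = q * (1 + E\<^sub>P) / (1 + E\<^sub>N)"
    using s N0 denom by (simp add: q_def)
  also have "\<dots> = 1 - (1 - q) + q * (E\<^sub>P - E\<^sub>N) / (1 + E\<^sub>N)"
    using denom by (simp add: divide_simps) (simp add: algebra_simps)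
  finally have ratio: "M * (P * s * (1 + E\<^sub>P)) / (N * s * (1 + E\<^sub>N)) - 1
      = q * (E\<^sub>P - E\<^sub>N) / (1 + E\<^sub>N) - (1 - q)" by simp
  have "\<bar>q * (E\<^sub>P - E\<^sub>N) / (1 + E\<^sub>N)\<bar> = q * \<bar>E\<^sub>P - E\<^sub>N\<bar> / (1 + E\<^sub>N)"
    using q denom by (simp add: abs_mult)
  also have "\<dots> \<le> 1 * \<bar>E\<^sub>P - E\<^sub>N\<bar> / (1/2)"
    using q denom by (intro frac_le mult_mono) auto
  also have "\<dots> \<le> 2 * (\<bar>E\<^sub>P\<bar> + \<bar>E\<^sub>N\<bar>)"
    using abs_triangle_ineq4[of E\<^sub>P E\<^sub>N] by simp
  also have "\<dots> \<le> 2 * K * (2 powr \<theta> + 1) * N powr (-((1 - \<alpha>) * \<theta>))"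
  proof -
    have "P powr (-\<theta>) \<le> 2 powr \<theta> * N powr (-((1 - \<alpha>) * \<theta>))"
      using N0 P \<theta> by (intro block_powr_bound) auto
    moreover have "N powr (-\<theta>) \<le> N powr (-((1 - \<alpha>) * \<theta>))"
      using N \<theta> \<alpha> by (intro powr_mono) (auto simp: algebra_simps mult_left_le_one_le)
    ultimately have "\<bar>E\<^sub>P\<bar> + \<bar>E\<^sub>N\<bar>
        \<le> K * (2 powr \<theta> * N powr (-((1 - \<alpha>) * \<theta>))) + K * N powr (-((1 - \<alpha>) * \<theta>))"
      using E(1,2) K by (meson add_mono mult_left_mono order_trans)
    then show ?thesis by (simp add: algebra_simps)
  qed
  finally show ?thesis
    unfolding ratio using q \<open>1 - q \<le> N powr (-\<alpha>)\<close> by linarith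
qed

lemma block_variance_ratio_asymptotics:
  fixes s2 :: "nat \<Rightarrow> real" and p m :: "nat \<Rightarrow> nat" and \<sigma>2 \<theta> \<alpha> :: real
  assumes A2: "(\<lambda>n. \<bar>s2 n / (real n * \<sigma>2) - 1\<bar>) \<in> O(\<lambda>n. real n powr (- \<theta>))"
    and \<sigma>2: "\<sigma>2 > 0" and \<theta>: "\<theta> > 0" and \<alpha>: "0 < \<alpha>" "\<alpha> < 1"
    and p_def: "\<And>n. p n = nat \<lfloor>real n powr (1 - \<alpha>)\<rfloor>"
    and m_def: "\<And>n. m n = nat \<lfloor>real n / real (p n)\<rfloor>"
  shows "\<exists>K \<ge> 0. eventually (\<lambda>n. \<bar>real (m n) * s2 (p n) / s2 n - 1\<bar>
           \<le> real n powr (-\<alpha>) + K * real n powr (-((1 - \<alpha>) * \<theta>))) sequentially"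
proof -
  define E where "E n = s2 n / (real n * \<sigma>2) - 1" for n
  obtain K where K: "K > 0" and E_le: "eventually (\<lambda>n. \<bar>E n\<bar> \<le> K * real n powr (-\<theta>)) sequentially"
    using landau_o.bigE[OF A2] by (auto simp: E_def)
  have E_p_le: "eventually (\<lambda>n. \<bar>E (p n)\<bar> \<le> K * real (p n) powr (-\<theta>)) sequentially"
    using eventually_compose_filterlim[OF E_le block_length_bounds(3)[OF \<alpha>(2) p_def]] .
  have "eventually (\<lambda>n. K * real n powr (-\<theta>) \<le> 1/2) sequentially"
    using K \<theta> by real_asymp
  with E_le have E_half: "eventually (\<lambda>n. \<bar>E n\<bar> \<le> 1/2) sequentially"
    by eventually_elim simp
  show ?thesis
  proof (intro exI conjI)
    show "2 * K * (2 powr \<theta> + 1) \<ge> 0" using K by simp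
    from E_le E_p_le E_half block_length_bounds(2)[OF \<alpha>(2) p_def] eventually_ge_at_top[of 1]
    show "eventually (\<lambda>n. \<bar>real (m n) * s2 (p n) / s2 n - 1\<bar>
        \<le> real n powr (-\<alpha>) + 2 * K * (2 powr \<theta> + 1) * real n powr (-((1 - \<alpha>) * \<theta>))) sequentially"
    proof eventually_elim
      case (elim n)
      have "real n powr (1 - \<alpha>) > 0" using elim by simp
      then have P: "real (p n) > 0" using elim by linarith
      have "s2 n = real n * \<sigma>2 * (1 + E n)" "s2 (p n) = real (p n) * \<sigma>2 * (1 + E (p n))"
        using elim P \<sigma>2 by (simp_all add: E_def)
      then show ?case
        unfolding m_def
        using block_variance_ratio_error[of "real n" "real (p n)" \<alpha> "real (nat \<lfloor>real n / real (p n)\<rfloor>)"]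
          nat_floor_divide_mult_bounds[of "real n" "real (p n)"] block_length_bounds(1)[OF \<alpha>(2) p_def]
          elim P \<sigma>2 \<theta> \<alpha> K
        by simp
    qed
  qed
qed

lemma two_regime_rate_bound:
  fixes N S K \<alpha> \<theta> b :: real
  assumes N: "N \<ge> 3" and b: "b < 0" and \<theta>: "\<theta> > 0" and \<alpha>: "0 < \<alpha>" "\<alpha> < 1" and K: "K \<ge> 0"
    and S: "S \<le> 2 * (N powr (-\<alpha>) + K * N powr (-((1 - \<alpha>) * \<theta>)))"
  shows "S < (2 * (1 + K) + 1) * (1 / (ln N powr b * N powr (\<alpha> / 2)))
               * (if \<alpha> \<le> 2 * \<theta> / (1 + 2 * \<theta>) then 1 else 0)
           + (2 * (1 + K) + 1) * (1 / N powr ((1 - \<alpha>) * \<theta>))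
               * (if \<alpha> > 2 * \<theta> / (1 + 2 * \<theta>) then 1 else 0)"
proof -
  define C where "C = 2 * (1 + K) + 1"
  have C: "C > 0" using K by (simp add: C_def)
  have S_lt: "S < C * N powr (-\<gamma>)" if "\<gamma> \<le> \<alpha>" "\<gamma> \<le> (1 - \<alpha>) * \<theta>" for \<gamma>
  proof -
    have "N powr (-\<alpha>) \<le> N powr (-\<gamma>)"
      using N that by (auto intro: powr_mono)
    moreover have "K * N powr (-((1 - \<alpha>) * \<theta>)) \<le> K * N powr (-\<gamma>)"
      using N that K by (auto intro: powr_mono mult_left_mono)
    ultimately have "S \<le> 2 * (1 + K) * N powr (-\<gamma>)"
      using S by (simp add: algebra_simps)
    moreover have "N powr (-\<gamma>) > 0" using N by simp
    moreover have "C * N powr (-\<gamma>) = 2 * (1 + K) * N powr (-\<gamma>) + N powr (-\<gamma>)"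
      by (simp add: C_def algebra_simps)
    ultimately show ?thesis by linarith
  qed
  have regime: "\<alpha> \<le> 2 * \<theta> / (1 + 2 * \<theta>) \<longleftrightarrow> \<alpha> / 2 \<le> (1 - \<alpha>) * \<theta>"
    using \<theta> by (simp add: divide_simps algebra_simps)
  show ?thesis
  proof (cases "\<alpha> / 2 \<le> (1 - \<alpha>) * \<theta>")
    case True
    have "ln N \<ge> 1"
      using N exp_le ln_ge_iff[of N 1] by simp
    then have "0 < ln N powr b" "ln N powr b \<le> 1"
      using b powr_mono[of b 0 "ln N"] by simp_all
    then have "C * N powr (-(\<alpha> / 2)) \<le> C * (1 / (ln N powr b * N powr (\<alpha> / 2)))"
      using N C by (simp add: powr_minus divide_simps)
    moreover have "\<alpha> \<le> 2 * \<theta> / (1 + 2 * \<theta>)" using True regime by simp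
    ultimately show ?thesis
      using S_lt[of "\<alpha> / 2"] True \<alpha> by (simp add: C_def)
  next
    case False
    then have "\<not> \<alpha> \<le> 2 * \<theta> / (1 + 2 * \<theta>)" using regime by simp
    moreover have "S < C * (1 / N powr ((1 - \<alpha>) * \<theta>))"
      using S_lt[of "(1 - \<alpha>) * \<theta>"] False \<alpha> by (simp add: powr_minus_divide)
    ultimately show ?thesis by (simp add: C_def)
  qed
qed

theorem proposition3p9:
  fixes M :: "'a measure" and X :: "nat \<Rightarrow> 'a \<Rightarrow> real"
    and c :: "nat \<Rightarrow> real" and \<sigma>2 \<theta> \<alpha> b :: real
    and S :: "nat \<Rightarrow> 'a \<Rightarrow> real" and s2 :: "nat \<Rightarrow> real"
    and p m :: "nat \<Rightarrow> nat" and bn :: "nat \<Rightarrow> real"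
  assumes prob: "prob_space M"
    and rv: "\<And>n. n \<ge> 1 \<Longrightarrow> X n \<in> borel_measurable M"
    and sq_int: "\<And>n. n \<ge> 1 \<Longrightarrow> integrable M (\<lambda>\<omega>. (X n \<omega>)\<^sup>2)"
    and centered: "\<And>n. n \<ge> 1 \<Longrightarrow> (\<integral>\<omega>. X n \<omega> \<partial>M) = 0"
    and stat: "strictly_stationary M X"
    and assoc: "associated M X"
    and c_def: "\<And>j. c j = (\<integral>\<omega>. X 1 \<omega> * X (1 + j) \<omega> \<partial>M)
                         - (\<integral>\<omega>. X 1 \<omega> \<partial>M) * (\<integral>\<omega>. X (1 + j) \<omega> \<partial>M)"
    and c_summable: "summable (\<lambda>j. c (Suc j))"
    and \<sigma>2_def: "\<sigma>2 = (\<integral>\<omega>. (X 1 \<omega>)\<^sup>2 \<partial>M) + 2 * (\<Sum>j. c (Suc j))"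
    and \<sigma>2_pos: "\<sigma>2 > 0"
    and S_def: "\<And>n \<omega>. S n \<omega> = (\<Sum>j=1..n. X j \<omega>)"
    and s2_def: "\<And>n. s2 n = (\<integral>\<omega>. (S n \<omega>)\<^sup>2 \<partial>M)"
    and \<theta>_pos: "\<theta> > 0"
    and A2: "(\<lambda>n. \<bar>s2 n / (real n * \<sigma>2) - 1\<bar>) \<in> O(\<lambda>n. real n powr (- \<theta>))"
    and \<alpha>: "0 < \<alpha>" "\<alpha> < 1"
    and p_def: "\<And>n. p n = nat \<lfloor>real n powr (1 - \<alpha>)\<rfloor>"
    and m_def: "\<And>n. m n = nat \<lfloor>real n / real (p n)\<rfloor>"
    and b_neg: "b < 0"
    and bn_def: "\<And>n. bn n = ln (real n) powr b"
  shows "\<exists>C17 C18. C17 > 0 \<and> C18 > 0 \<and>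
    (\<forall>\<^sub>F n in sequentially. \<forall>G :: real measure.
       real_distribution G
       \<and> (\<forall>t. char G t = complex_of_real (exp (- (real (m n) * t\<^sup>2 * s2 (p n)) / (2 * s2 n))))
       \<longrightarrow> (SUP x. \<bar>cdf G x - cdf std_normal_distribution x\<bar>)
           < C17 * (1 / (bn n * real n powr (\<alpha> / 2))) * (if \<alpha> \<le> 2 * \<theta> / (1 + 2 * \<theta>) then 1 else 0)
             + C18 * (1 / real n powr ((1 - \<alpha>) * \<theta>)) * (if \<alpha> > 2 * \<theta> / (1 + 2 * \<theta>) then 1 else 0))"
proof -
  obtain K where K: "K \<ge> 0" and ratio: "eventually (\<lambda>n. \<bar>real (m n) * s2 (p n) / s2 n - 1\<bar>
      \<le> real n powr (-\<alpha>) + K * real n powr (-((1 - \<alpha>) * \<theta>))) sequentially"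
    using block_variance_ratio_asymptotics[OF A2 \<sigma>2_pos \<theta>_pos \<alpha> p_def m_def] by blast
  have "((\<lambda>n. real n powr (-\<alpha>) + K * real n powr (-((1 - \<alpha>) * \<theta>))) \<longlongrightarrow> 0) sequentially"
    using \<alpha> \<theta>_pos by (intro tendsto_add_zero tendsto_mult_right_zero) real_asymp+
  then have small: "eventually (\<lambda>n. real n powr (-\<alpha>) + K * real n powr (-((1 - \<alpha>) * \<theta>)) < 3/4)
      sequentially" by (rule order_tendstoD) simp
  define C where "C = 2 * (1 + K) + 1"
  have "C > 0" using K by (simp add: C_def)
  moreover from ratio small eventually_ge_at_top[of 3]
  have "\<forall>\<^sub>F n in sequentially. \<forall>G :: real measure.
       real_distribution G
       \<and> (\<forall>t. char G t = complex_of_real (exp (- (real (m n) * t\<^sup>2 * s2 (p n)) / (2 * s2 n))))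
       \<longrightarrow> (SUP x. \<bar>cdf G x - cdf std_normal_distribution x\<bar>)
           < C * (1 / (bn n * real n powr (\<alpha> / 2))) * (if \<alpha> \<le> 2 * \<theta> / (1 + 2 * \<theta>) then 1 else 0)
             + C * (1 / real n powr ((1 - \<alpha>) * \<theta>)) * (if \<alpha> > 2 * \<theta> / (1 + 2 * \<theta>) then 1 else 0)"
    (is "\<forall>\<^sub>F n in sequentially. \<forall>G. ?char n G \<longrightarrow> ?dist G < ?rate n")
  proof eventually_elim
    case (elim n)
    show ?case
    proof (intro allI impI)
      fix G assume G: "?char n G"
      define v where "v = real (m n) * s2 (p n) / s2 n"
      have v_err: "\<bar>v - 1\<bar> \<le> real n powr (-\<alpha>) + K * real n powr (-((1 - \<alpha>) * \<theta>))"
        using elim by (simp add: v_def)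
      have "\<And>t. char G t = complex_of_real (exp (- (v * t\<^sup>2) / 2))"
        using G by (simp add: v_def mult_ac)
      then have "?dist G \<le> 2 * \<bar>v - 1\<bar>"
        using G v_err elim by (intro SUP_cdf_centered_normal_diff_le) auto
      then show "?dist G < ?rate n"
        using two_regime_rate_bound[of "real n" b \<theta> \<alpha> K] v_err elim b_neg \<theta>_pos \<alpha> K
        by (simp add: C_def bn_def)
    qed
  qed
  ultimately show ?thesis by blast
qed

end
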